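(* Let $\mathbb{F}$ be $\mathbb{R}$ or $\mathbb{C}$, and let $U\in\mathbb{F}(\epsilon)^{r\times n}$ be such that for every $S\subseteq[n]$ of size $r$, $\lim_{\epsilon\to0}\det(U_S)$ exists. Then there exists $\widehat U\in\mathbb{F}^{r\times n}$ such that for every $S\subseteq[n]$ of size $r$, $$\lim_{\epsilon\to 0}\det(U_S)=\det(\widehat U_S).$$
   Context: $\mathbb{F}(\epsilon)$ is the field of rational functions in the indeterminate $\epsilon$; for $c\in\mathbb{F}(\epsilon)$, $\lim_{\epsilon\to0}c$ is the limit of the rational function at $\epsilon=0$ (when it exists). For $S\subseteq[n]$, $U_S$ denotes the submatrix of $U$ formed by the columns indexed by $S$. *)

theory Defs
  imports Complex_Main "HOL-Computational_Algebra.Polynomial" "HOL-Computational_Algebra.Fraction_Field"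
    "Jordan_Normal_Form.Determinant" "Jordan_Normal_Form.DL_Submatrix"
begin

text \<open>Rational functions in the indeterminate eps over a field F are the elements of
  the fraction field of F[eps], i.e. the type F poly fract.
  ratfun_has_lim f L: the rational function f has limit L as eps tends to 0, i.e. for
  (any) representation f = p/q with q nonzero, the function x |-> p(x)/q(x) tends to L
  as x tends to 0 (x ranging over F). All representations agree outside a finite set,
  so this does not depend on the chosen representation.\<close>

definition ratfun_has_lim :: "'a::real_normed_field poly fract \<Rightarrow> 'a \<Rightarrow> bool" where
  "ratfun_has_lim f L \<longleftrightarrow>
     (\<exists>p q. q \<noteq> 0 \<and> f = Fract p q \<and> ((\<lambda>x. poly p x / poly q x) \<longlongrightarrow> L) (at 0))"

end

theory Submission
  imports Defs
begin

text \<open>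
  The rational functions having a limit at 0 form a valuation ring: it is closed under
  products, and of any nonzero h either h or 1/h lies in it. Hence among the nonzero
  maximal minors D(S) = det U_S there is one, D(S0), dividing all the others in that
  ring. Multiplying U on the left by the inverse of U_S0, with one row rescaled by D(S0)
  so that the maximal minors do not change, gives a matrix whose entries are, by
  Cramer's rule, quotients D(T)/D(S0) up to sign and that factor, so they all have
  limits. The entrywise limit of this matrix is the required one, because determinants
  are polynomials in the entries.
\<close>

lemma eventually_poly_nonzero_at:
  fixes q :: "'a::real_normed_field poly"
  assumes "q \<noteq> 0"
  shows "eventually (\<lambda>x. poly q x \<noteq> 0) (at a)"
proof -
  have "eventually (\<lambda>x. \<forall>z\<in>{z. poly q z = 0}. x \<noteq> z) (at a)"
    by (intro eventually_ball_finite poly_roots_finite assms ballI eventually_neq_at_within)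
  then show ?thesis
    by (rule eventually_mono) auto
qed

lemma ratfun_has_limI:
  assumes "q \<noteq> 0" "f = Fract p q" "(g \<longlongrightarrow> L) (at 0)"
    and "eventually (\<lambda>x. g x = poly p x / poly q x) (at 0)"
  shows "ratfun_has_lim f L"
  unfolding ratfun_has_lim_def using assms tendsto_cong[OF assms(4)] by blast

lemma ratfun_has_lim_add:
  fixes f g :: "'a::real_normed_field poly fract"
  assumes "ratfun_has_lim f a" "ratfun_has_lim g b"
  shows "ratfun_has_lim (f + g) (a + b)"
proof -
  obtain p q where pq: "q \<noteq> 0" "f = Fract p q" "((\<lambda>x. poly p x / poly q x) \<longlongrightarrow> a) (at 0)"
    using assms(1) unfolding ratfun_has_lim_def by blast
  obtain p' q' where pq': "q' \<noteq> 0" "g = Fract p' q'" "((\<lambda>x. poly p' x / poly q' x) \<longlongrightarrow> b) (at 0)"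
    using assms(2) unfolding ratfun_has_lim_def by blast
  show ?thesis
  proof (rule ratfun_has_limI)
    show "f + g = Fract (p * q' + p' * q) (q * q')" and "q * q' \<noteq> 0"
      using pq pq' by simp_all
    show "((\<lambda>x. poly p x / poly q x + poly p' x / poly q' x) \<longlongrightarrow> a + b) (at 0)"
      using pq(3) pq'(3) by (rule tendsto_add)
    show "eventually (\<lambda>x. poly p x / poly q x + poly p' x / poly q' x
        = poly (p * q' + p' * q) x / poly (q * q') x) (at 0)"
      using eventually_conj[OF eventually_poly_nonzero_at[OF pq(1)]
          eventually_poly_nonzero_at[OF pq'(1)]]
      by (rule eventually_mono) (simp add: field_simps)
  qed
qed

lemma ratfun_has_lim_mult:
  fixes f g :: "'a::real_normed_field poly fract"
  assumes "ratfun_has_lim f a" "ratfun_has_lim g b"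
  shows "ratfun_has_lim (f * g) (a * b)"
proof -
  obtain p q where pq: "q \<noteq> 0" "f = Fract p q" "((\<lambda>x. poly p x / poly q x) \<longlongrightarrow> a) (at 0)"
    using assms(1) unfolding ratfun_has_lim_def by blast
  obtain p' q' where pq': "q' \<noteq> 0" "g = Fract p' q'" "((\<lambda>x. poly p' x / poly q' x) \<longlongrightarrow> b) (at 0)"
    using assms(2) unfolding ratfun_has_lim_def by blast
  show ?thesis
  proof (rule ratfun_has_limI)
    show "f * g = Fract (p * p') (q * q')" and "q * q' \<noteq> 0"
      using pq pq' by simp_all
    show "((\<lambda>x. poly p x / poly q x * (poly p' x / poly q' x)) \<longlongrightarrow> a * b) (at 0)"
      using pq(3) pq'(3) by (rule tendsto_mult)
  qed simp
qed

lemma ratfun_has_lim_of_int: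
  "ratfun_has_lim (of_int k :: 'a::real_normed_field poly fract) (of_int k)"
proof (rule ratfun_has_limI[where g = "\<lambda>_. of_int k"])
  show "(of_int k :: 'a poly fract) = Fract (of_int k) 1"
    by (cases k) (simp_all add: of_nat_fract One_fract_def)
qed (simp_all add: poly_of_int)

lemma ratfun_has_lim_sum:
  fixes f :: "'b \<Rightarrow> 'a::real_normed_field poly fract"
  assumes "finite A" "\<And>i. i \<in> A \<Longrightarrow> ratfun_has_lim (f i) (g i)"
  shows "ratfun_has_lim (sum f A) (sum g A)"
  using assms
  by (induction A rule: finite_induct)
    (auto intro!: ratfun_has_lim_add ratfun_has_lim_of_int[of 0, simplified])

lemma ratfun_has_lim_prod:
  fixes f :: "'b \<Rightarrow> 'a::real_normed_field poly fract"
  assumes "finite A" "\<And>i. i \<in> A \<Longrightarrow> ratfun_has_lim (f i) (g i)"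
  shows "ratfun_has_lim (prod f A) (prod g A)"
  using assms
  by (induction A rule: finite_induct)
    (auto intro!: ratfun_has_lim_mult ratfun_has_lim_of_int[of 1, simplified])

lemma ratfun_has_lim_det:
  fixes M :: "'a::real_normed_field poly fract mat"
  assumes "M \<in> carrier_mat m m" "N \<in> carrier_mat m m"
    and "\<And>i j. i < m \<Longrightarrow> j < m \<Longrightarrow> ratfun_has_lim (M $$ (i, j)) (N $$ (i, j))"
  shows "ratfun_has_lim (det M) (det N)"
  unfolding det_def'[OF assms(1)] det_def'[OF assms(2)]
  by (intro ratfun_has_lim_sum ratfun_has_lim_mult ratfun_has_lim_of_int ratfun_has_lim_prod)
    (auto simp: assms(3) finite_permutations permutes_in_image)

lemma poly_X_power_factor:
  fixes p :: "'a::idom poly"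
  assumes "p \<noteq> 0"
  obtains k p1 where "p = [:0, 1:] ^ k * p1" "poly p1 0 \<noteq> 0"
proof -
  obtain p1 where "p = [:- 0, 1:] ^ order 0 p * p1" "\<not> [:- 0, 1:] dvd p1"
    using order_decomp[OF assms] by blast
  then show ?thesis
    using that poly_eq_0_iff_dvd[of p1 0] by auto
qed

lemma ratfun_has_lim_Fract_X_power:
  fixes p1 q1 :: "'a::real_normed_field poly"
  assumes "poly q1 0 \<noteq> 0" "b \<le> a"
  shows "ratfun_has_lim (Fract ([:0, 1:] ^ a * p1) ([:0, 1:] ^ b * q1))
    (0 ^ (a - b) * poly p1 0 / poly q1 0)"
proof (rule ratfun_has_limI[where g = "\<lambda>x. x ^ (a - b) * poly p1 x / poly q1 x"])
  have "isCont (\<lambda>x. x ^ (a - b) * poly p1 x / poly q1 x) 0"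
    using assms(1) by (intro continuous_intros) auto
  then show "((\<lambda>x. x ^ (a - b) * poly p1 x / poly q1 x)
      \<longlongrightarrow> 0 ^ (a - b) * poly p1 0 / poly q1 0) (at 0)"
    by (simp add: isCont_def)
  have "x ^ a = x ^ (a - b) * x ^ b" for x :: 'a
    using assms(2) by (simp flip: power_add)
  then show "eventually (\<lambda>x. x ^ (a - b) * poly p1 x / poly q1 x
      = poly ([:0, 1:] ^ a * p1) x / poly ([:0, 1:] ^ b * q1) x) (at 0)"
    unfolding eventually_at_filter by (intro always_eventually) (simp add: poly_power)
qed (use assms(1) in auto)

lemma ratfun_has_lim_or_inverse:
  fixes h :: "'a::real_normed_field poly fract"
  assumes "h \<noteq> 0"
  shows "(\<exists>L. ratfun_has_lim h L) \<or> (\<exists>L. ratfun_has_lim (inverse h) L)"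
proof -
  obtain p q where h: "h = Fract p q" "q \<noteq> 0" "p \<noteq> 0"
    using assms by (cases h rule: Fract_cases_nonzero) auto
  obtain a p1 where p: "p = [:0, 1:] ^ a * p1" "poly p1 0 \<noteq> 0"
    using poly_X_power_factor[OF h(3)] .
  obtain b q1 where q: "q = [:0, 1:] ^ b * q1" "poly q1 0 \<noteq> 0"
    using poly_X_power_factor[OF h(2)] .
  show ?thesis
  proof (cases "b \<le> a")
    case True
    then show ?thesis using ratfun_has_lim_Fract_X_power[OF q(2) True] h p q by auto
  next
    case False
    then show ?thesis using ratfun_has_lim_Fract_X_power[OF p(2), of a b] h p q by auto
  qed
qed

text \<open>Think of R as a valuation ring: \<open>y / x \<in> R\<close> says that x divides y.\<close>

lemma finite_ex_divisor_of_all: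
  fixes R :: "'a::field set"
  assumes mult: "\<And>x y. x \<in> R \<Longrightarrow> y \<in> R \<Longrightarrow> x * y \<in> R"
    and total: "\<And>x. x \<noteq> 0 \<Longrightarrow> x \<in> R \<or> inverse x \<in> R"
    and F: "finite F" "F \<noteq> {}" "0 \<notin> F"
  obtains x where "x \<in> F" "\<And>y. y \<in> F \<Longrightarrow> y / x \<in> R"
proof -
  have one: "1 \<in> R"
    using total[of 1] by simp
  have "\<exists>x\<in>F. \<forall>y\<in>F. y / x \<in> R"
    using F
  proof (induction F rule: finite_ne_induct)
    case (singleton a)
    then show ?case using one by simp
  next
    case (insert a F)
    then obtain m where m: "m \<in> F" "\<forall>y\<in>F. y / m \<in> R" by auto
    have "a \<noteq> 0" "m \<noteq> 0" using insert.prems m(1) by auto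
    show ?case
    proof (cases "a / m \<in> R")
      case True
      with m show ?thesis by auto
    next
      case False
      then have "m / a \<in> R"
        using total[of "a / m"] \<open>a \<noteq> 0\<close> \<open>m \<noteq> 0\<close> by simp
      then have "y / a \<in> R" if "y \<in> F" for y
        using mult[of "y / m" "m / a"] m(2) that \<open>m \<noteq> 0\<close> by simp
      then show ?thesis using one \<open>a \<noteq> 0\<close> by auto
    qed
  qed
  then show ?thesis using that by blast
qed

lemma pick_atLeastLessThan_0: "i < r \<Longrightarrow> pick {0..<r} i = i"
proof -
  assume "i < r"
  then have "{a \<in> {0..<r}. a < i} = {0..<i}" by auto
  then show ?thesis using pick_card_in_set[of i "{0..<r}"] \<open>i < r\<close> by simp
qed

lemma pick_less: "S \<subseteq> {0..<n} \<Longrightarrow> k < card S \<Longrightarrow> pick S k < n"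
  using pick_in_set_le[of k S] by auto

lemma submatrix_all_rows:
  assumes "U \<in> carrier_mat r n" "S \<subseteq> {0..<n}"
  shows "submatrix U {0..<r} S = mat r (card S) (\<lambda>(i, k). U $$ (i, pick S k))"
proof -
  have "{i. i < dim_row U \<and> i \<in> {0..<r}} = {0..<r}" "{j. j < dim_col U \<and> j \<in> S} = S"
    using assms by auto
  then show ?thesis
    unfolding submatrix_def by (intro cong_mat) (simp_all add: pick_atLeastLessThan_0)
qed

lemma col_submatrix_all_rows:
  assumes "U \<in> carrier_mat r n" "S \<subseteq> {0..<n}" "k < card S"
  shows "col (submatrix U {0..<r} S) k = col U (pick S k)"
  unfolding submatrix_all_rows[OF assms(1,2)]
  by (rule eq_vecI) (use assms pick_less[OF assms(2,3)] in simp_all)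

lemma det_submatrix_mult_left:
  fixes M :: "'a::comm_ring_1 mat"
  assumes M: "M \<in> carrier_mat r r" and U: "U \<in> carrier_mat r n"
    and S: "S \<subseteq> {0..<n}" "card S = r"
  shows "det (submatrix (M * U) {0..<r} S) = det M * det (submatrix U {0..<r} S)"
proof -
  have MU: "M * U \<in> carrier_mat r n"
    using M U by simp
  have U_S: "submatrix U {0..<r} S \<in> carrier_mat r r"
    using S by (simp add: submatrix_all_rows[OF U S(1)])
  have "submatrix (M * U) {0..<r} S = M * submatrix U {0..<r} S"
  proof (rule eq_matI)
    fix i k
    assume "i < dim_row (M * submatrix U {0..<r} S)" "k < dim_col (M * submatrix U {0..<r} S)"
    then have ik: "i < r" "k < card S"
      using M U_S S(2) by auto
    then show "submatrix (M * U) {0..<r} S $$ (i, k) = (M * submatrix U {0..<r} S) $$ (i, k)"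
      using M U U_S S(2) pick_less[OF S(1) ik(2)]
      by (simp add: submatrix_all_rows[OF MU S(1)] col_submatrix_all_rows[OF U S(1)])
  qed (use M U_S MU S in \<open>simp_all add: submatrix_all_rows[OF MU S(1)]\<close>)
  then show ?thesis
    using det_mult[OF M U_S] by simp
qed

lemma ex_permutes_pick_image:
  assumes inj: "inj_on \<sigma> {0..<r}"
  obtains p where "p permutes {0..<r}" "\<And>k. k < r \<Longrightarrow> pick (\<sigma> ` {0..<r}) (p k) = \<sigma> k"
proof -
  define S where "S = \<sigma> ` {0..<r}"
  \<comment> \<open>the position of \<sigma> k in the increasing enumeration of S\<close>
  define p where "p k = (if k < r then card {a\<in>S. a < \<sigma> k} else k)" for k
  have pick_p: "pick S (p k) = \<sigma> k" if "k < r" for k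
    using pick_card_in_set[of "\<sigma> k" S] that unfolding p_def S_def by auto
  have p_less: "p k < r" if "k < r" for k
  proof -
    have "{a\<in>S. a < \<sigma> k} \<subset> S" using that unfolding S_def by auto
    then have "card {a\<in>S. a < \<sigma> k} < card S"
      by (rule psubset_card_mono[rotated]) (simp add: S_def)
    then show ?thesis
      using that card_image[OF inj] unfolding p_def S_def by auto
  qed
  have "inj_on p {0..<r}"
    by (rule inj_onI) (metis atLeastLessThan_iff inj inj_onD pick_p)
  moreover have "p ` {0..<r} \<subseteq> {0..<r}" using p_less by auto
  ultimately have "bij_betw p {0..<r} {0..<r}"
    by (simp add: bij_betw_def endo_inj_surj)
  then have "p permutes {0..<r}"
    by (rule bij_imp_permutes) (auto simp: p_def)
  with pick_p that show ?thesis unfolding S_def by blast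
qed

lemma det_mat_inj_columns:
  fixes U :: "'a::comm_ring_1 mat"
  assumes U: "U \<in> carrier_mat r n" and \<sigma>: "\<sigma> ` {0..<r} \<subseteq> {0..<n}"
    and inj: "inj_on \<sigma> {0..<r}"
  obtains p where "p permutes {0..<r}"
    "det (mat r r (\<lambda>(i, k). U $$ (i, \<sigma> k))) = signof p * det (submatrix U {0..<r} (\<sigma> ` {0..<r}))"
proof -
  define S where "S = \<sigma> ` {0..<r}"
  define M where "M = submatrix U {0..<r} S"
  obtain p where p: "p permutes {0..<r}" and pick_p: "\<And>k. k < r \<Longrightarrow> pick S (p k) = \<sigma> k"
    using ex_permutes_pick_image[OF inj] unfolding S_def by blast
  have M: "M = mat r r (\<lambda>(i, k). U $$ (i, pick S k))"
    using \<sigma> card_image[OF inj] unfolding M_def S_def submatrix_all_rows[OF U \<sigma>] by simp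
  have p_less: "p k < r" if "k < r" for k
    using permutes_in_image[OF p] that by simp
  have "transpose_mat (mat r r (\<lambda>(i, k). U $$ (i, \<sigma> k)))
      = mat r r (\<lambda>(k, i). transpose_mat M $$ (p k, i))"
    by (rule eq_matI) (auto simp: M pick_p p_less)
  then have "det (mat r r (\<lambda>(i, k). U $$ (i, \<sigma> k))) = signof p * det (transpose_mat M)"
    using det_transpose[of "mat r r (\<lambda>(i, k). U $$ (i, \<sigma> k))" r]
      det_permute_rows[of "transpose_mat M" r p] p by (simp add: M)
  also have "det (transpose_mat M) = det M"
    using det_transpose[of M r] by (simp add: M)
  finally show ?thesis
    using that p unfolding M_def S_def by blast
qed

lemma mult_adj_mat_inverse_det:
  fixes A :: "'a::field mat"
  assumes A: "A \<in> carrier_mat n n" and "det A \<noteq> 0"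
  shows "A * (inverse (det A) \<cdot>\<^sub>m adj_mat A) = 1\<^sub>m n"
proof -
  have "A * (inverse (det A) \<cdot>\<^sub>m adj_mat A) = inverse (det A) \<cdot>\<^sub>m (A * adj_mat A)"
    using A adj_mat(1)[OF A] by (rule mult_smult_distrib)
  also have "\<dots> = 1\<^sub>m n"
    unfolding adj_mat(2)[OF A] by (rule eq_matI) (use assms(2) in simp_all)
  finally show ?thesis .
qed

lemma cramer_right_inverse:
  fixes A :: "'a::field mat"
  assumes A: "A \<in> carrier_mat n n" and B: "B \<in> carrier_mat n n" "A * B = 1\<^sub>m n"
    and v: "v \<in> carrier_vec n" and i: "i < n"
  shows "det (replace_col A v i) = (B *\<^sub>v v) $ i * det A"
proof -
  have "A *\<^sub>v (B *\<^sub>v v) = v"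
    using assoc_mult_mat_vec[OF A B(1) v, symmetric] B(2) v by simp
  then show ?thesis
    using cramer_lemma_mat[OF A mult_mat_vec_carrier[OF B(1) v] i] by simp
qed

lemma right_inverse_mult_entry_eq_minor_quotient:
  fixes U :: "'a::field mat"
  assumes U: "U \<in> carrier_mat r n" and S0: "S0 \<subseteq> {0..<n}" "card S0 = r"
    and B: "B \<in> carrier_mat r r" "submatrix U {0..<r} S0 * B = 1\<^sub>m r"
    and ij: "i < r" "j < n"
  obtains c T where "T \<subseteq> {0..<n}" "card T = r"
    "(B * U) $$ (i, j) = of_int c * det (submatrix U {0..<r} T) / det (submatrix U {0..<r} S0)"
proof -
  define A where "A = submatrix U {0..<r} S0"
  define \<sigma> where "\<sigma> k = (if k = i then j else pick S0 k)" for k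
  let ?A\<sigma> = "mat r r (\<lambda>(a, k). U $$ (a, \<sigma> k))"
  have A: "A \<in> carrier_mat r r"
    using U S0 by (simp add: A_def submatrix_all_rows)
  have "det A * det B = 1"
    using det_mult[OF A B(1)] B(2) by (simp add: A_def)
  then have "(B * U) $$ (i, j) = det (replace_col A (col U j) i) / det A"
    using cramer_right_inverse[OF A B[folded A_def] col_carrier_vec[OF ij(2) U] ij(1)] B(1) U ij
    by (auto simp: field_simps)
  also have "replace_col A (col U j) i = ?A\<sigma>"
  proof (rule eq_matI)
    fix a k assume "a < dim_row ?A\<sigma>" "k < dim_col ?A\<sigma>"
    then show "replace_col A (col U j) i $$ (a, k) = ?A\<sigma> $$ (a, k)"
      using A U ij S0(2) pick_less[OF S0(1), of k]
      by (simp add: replace_col_def \<sigma>_def A_def submatrix_all_rows[OF U S0(1)])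
  qed (use A in \<open>simp_all add: replace_col_def\<close>)
  finally have BU: "(B * U) $$ (i, j) = det ?A\<sigma> / det A" .
  have \<sigma>: "\<sigma> ` {0..<r} \<subseteq> {0..<n}"
    using ij pick_less[OF S0(1)] S0(2) by (auto simp: \<sigma>_def)
  show ?thesis
  proof (cases "inj_on \<sigma> {0..<r}")
    case True
    then obtain p where "det ?A\<sigma> = signof p * det (submatrix U {0..<r} (\<sigma> ` {0..<r}))"
      using det_mat_inj_columns[OF U \<sigma>] by blast
    moreover have "card (\<sigma> ` {0..<r}) = r"
      using True by (simp add: card_image)
    ultimately show ?thesis
      using that[of "\<sigma> ` {0..<r}" "sign p"] \<sigma> BU by (simp add: A_def)
  next
    case False
    then obtain k l where kl: "k < r" "l < r" "k \<noteq> l" "\<sigma> k = \<sigma> l"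
      unfolding inj_on_def by auto
    then have "col ?A\<sigma> k = col ?A\<sigma> l"
      by (intro eq_vecI) simp_all
    then have "det ?A\<sigma> = 0"
      using kl by (intro det_identical_columns[of _ r k l]) simp_all
    then show ?thesis
      using that[of S0 0] S0 BU by simp
  qed
qed

lemma ex_same_minors_convergent_entries_dividing_minor:
  fixes U :: "'a::real_normed_field poly fract mat"
  assumes U: "U \<in> carrier_mat r n" and r: "0 < r"
    and S0: "S0 \<subseteq> {0..<n}" "card S0 = r" "det (submatrix U {0..<r} S0) \<noteq> 0"
    and lim_S0: "ratfun_has_lim (det (submatrix U {0..<r} S0)) c0"
    and lim_quotient: "\<And>T. T \<subseteq> {0..<n} \<Longrightarrow> card T = r \<Longrightarrow>
      \<exists>L. ratfun_has_lim (det (submatrix U {0..<r} T) / det (submatrix U {0..<r} S0)) L"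
  obtains V where "V \<in> carrier_mat r n"
    "\<And>i j. i < r \<Longrightarrow> j < n \<Longrightarrow> \<exists>L. ratfun_has_lim (V $$ (i, j)) L"
    "\<And>S. S \<subseteq> {0..<n} \<Longrightarrow> card S = r \<Longrightarrow> det (submatrix V {0..<r} S) = det (submatrix U {0..<r} S)"
proof -
  define A where "A = submatrix U {0..<r} S0"
  define d where "d = det A"
  define B where "B = inverse d \<cdot>\<^sub>m adj_mat A"
  define M where "M = multrow_mat r 0 d * B"
  have A: "A \<in> carrier_mat r r"
    using U S0 by (simp add: A_def submatrix_all_rows)
  have B: "B \<in> carrier_mat r r"
    using adj_mat(1)[OF A] by (simp add: B_def)
  have AB: "A * B = 1\<^sub>m r"
    using mult_adj_mat_inverse_det[OF A] S0(3) by (simp add: B_def d_def A_def)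
  then have "d * det B = 1"
    using det_mult[OF A B] by (simp add: d_def)
  then have det_M: "det M = 1"
    unfolding M_def det_mult[OF multrow_mat_carrier B] det_multrow_mat[OF r] .
  have M: "M \<in> carrier_mat r r"
    using mult_carrier_mat[OF multrow_mat_carrier B] by (simp add: M_def)
  have MU: "M * U = multrow 0 d (B * U)"
    using multrow_mat[of "B * U" r n] assoc_mult_mat[OF multrow_mat_carrier B U] B U
    by (simp add: M_def)
  show ?thesis
  proof (rule that[of "M * U"])
    show "M * U \<in> carrier_mat r n"
      using M U by simp
    show "det (submatrix (M * U) {0..<r} S) = det (submatrix U {0..<r} S)"
      if "S \<subseteq> {0..<n}" "card S = r" for S
      using det_submatrix_mult_left[OF M U that] det_M by simp
    fix i j assume ij: "i < r" "j < n"
    obtain c T where T: "T \<subseteq> {0..<n}" "card T = r"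
      and BU: "(B * U) $$ (i, j) = of_int c * det (submatrix U {0..<r} T) / d"
      using right_inverse_mult_entry_eq_minor_quotient[OF U S0(1,2) B AB[unfolded A_def] ij]
      unfolding d_def A_def by blast
    obtain L where "ratfun_has_lim (det (submatrix U {0..<r} T) / d) L"
      using lim_quotient[OF T] unfolding d_def A_def by blast
    then have "ratfun_has_lim ((B * U) $$ (i, j)) (of_int c * L)"
      unfolding BU times_divide_eq_right[symmetric]
      by (rule ratfun_has_lim_mult[OF ratfun_has_lim_of_int])
    then show "\<exists>L. ratfun_has_lim ((M * U) $$ (i, j)) L"
      using ratfun_has_lim_mult[OF lim_S0] B U ij unfolding MU d_def A_def by (cases "i = 0") auto
  qed
qed

lemma ratfun_has_lim_minors_entrywise:
  fixes V :: "'a::real_normed_field poly fract mat"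
  assumes V: "V \<in> carrier_mat r n"
    and lim: "\<And>i j. i < r \<Longrightarrow> j < n \<Longrightarrow> \<exists>L. ratfun_has_lim (V $$ (i, j)) L"
  obtains Vh where "Vh \<in> carrier_mat r n"
    "\<And>S. S \<subseteq> {0..<n} \<Longrightarrow> card S = r \<Longrightarrow>
      ratfun_has_lim (det (submatrix V {0..<r} S)) (det (submatrix Vh {0..<r} S))"
proof -
  define Vh where "Vh = mat r n (\<lambda>(i, j). SOME L. ratfun_has_lim (V $$ (i, j)) L)"
  have Vh: "Vh \<in> carrier_mat r n"
    by (simp add: Vh_def)
  have "ratfun_has_lim (V $$ (i, j)) (Vh $$ (i, j))" if "i < r" "j < n" for i j
    using someI_ex[OF lim[OF that]] that by (simp add: Vh_def)
  then have "ratfun_has_lim (det (submatrix V {0..<r} S)) (det (submatrix Vh {0..<r} S))"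
    if "S \<subseteq> {0..<n}" "card S = r" for S
    using that V Vh pick_less[OF that(1)]
    by (intro ratfun_has_lim_det[of _ r]) (simp_all add: submatrix_all_rows)
  with Vh that show ?thesis by blast
qed

lemma ratfun_ex_dividing_member:
  fixes f :: "'b \<Rightarrow> 'a::real_normed_field poly fract"
  assumes I: "finite I" "i \<in> I" "f i \<noteq> 0"
  obtains i0 where "i0 \<in> I" "f i0 \<noteq> 0" "\<And>j. j \<in> I \<Longrightarrow> \<exists>L. ratfun_has_lim (f j / f i0) L"
proof -
  define Conv where "Conv = {h :: 'a poly fract. \<exists>L. ratfun_has_lim h L}"
  obtain x where x: "x \<in> f ` I - {0}" "\<And>y. y \<in> f ` I - {0} \<Longrightarrow> y / x \<in> Conv"
  proof (rule finite_ex_divisor_of_all[of Conv "f ` I - {0}"])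
    show "g * h \<in> Conv" if "g \<in> Conv" "h \<in> Conv" for g h
      using that by (auto simp: Conv_def intro: ratfun_has_lim_mult)
    show "h \<in> Conv \<or> inverse h \<in> Conv" if "h \<noteq> 0" for h
      using ratfun_has_lim_or_inverse[OF that] by (simp add: Conv_def)
  qed (use I that in auto)
  then obtain i0 where "i0 \<in> I" "f i0 = x" "x \<noteq> 0" by blast
  moreover have "\<exists>L. ratfun_has_lim (f j / x) L" if "j \<in> I" for j
  proof (cases "f j = 0")
    case True
    then show ?thesis
      using ratfun_has_lim_of_int[of 0] by auto
  qed (use x(2)[of "f j"] that in \<open>auto simp: Conv_def\<close>)
  ultimately show ?thesis
    using that by blast
qed

lemma det_submatrix_zero_mat:
  assumes "0 < r" "S \<subseteq> {0..<n}" "card S = r"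
  shows "det (submatrix (0\<^sub>m r n :: 'a::comm_ring_1 mat) {0..<r} S) = 0"
proof -
  have "submatrix (0\<^sub>m r n :: 'a mat) {0..<r} S = 0\<^sub>m r r"
    unfolding submatrix_all_rows[OF zero_carrier_mat assms(2)] assms(3)
    using pick_less[OF assms(2)] assms(3) by (auto intro: eq_matI)
  then show ?thesis
    using assms(1) by simp
qed

lemma ex_same_minors_convergent_entries:
  fixes U :: "'a::real_normed_field poly fract mat"
  assumes U: "U \<in> carrier_mat r n"
    and lim: "\<And>S. S \<subseteq> {0..<n} \<Longrightarrow> card S = r \<Longrightarrow> \<exists>L. ratfun_has_lim (det (submatrix U {0..<r} S)) L"
  obtains V where "V \<in> carrier_mat r n"
    "\<And>i j. i < r \<Longrightarrow> j < n \<Longrightarrow> \<exists>L. ratfun_has_lim (V $$ (i, j)) L"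
    "\<And>S. S \<subseteq> {0..<n} \<Longrightarrow> card S = r \<Longrightarrow> det (submatrix V {0..<r} S) = det (submatrix U {0..<r} S)"
proof -
  define Fam where "Fam = {S. S \<subseteq> {0..<n} \<and> card S = r}"
  define D where "D S = det (submatrix U {0..<r} S)" for S
  consider "r = 0" | "0 < r" "\<forall>S\<in>Fam. D S = 0" | S where "0 < r" "S \<in> Fam" "D S \<noteq> 0"
    by blast
  then show ?thesis
  proof cases
    case 1
    then show ?thesis
      using that[OF U] by simp
  next
    case 2
    show ?thesis
    proof (rule that[of "0\<^sub>m r n"])
      show "det (submatrix (0\<^sub>m r n) {0..<r} S) = det (submatrix U {0..<r} S)"
        if "S \<subseteq> {0..<n}" "card S = r" for S
        using det_submatrix_zero_mat[OF 2(1) that] 2(2) that by (simp add: Fam_def D_def)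
    qed (use ratfun_has_lim_of_int[of 0] in auto)
  next
    case (3 S)
    have "finite Fam"
      by (rule finite_subset[of _ "Pow {0..<n}"]) (auto simp: Fam_def)
    then obtain S0 where S0: "S0 \<in> Fam" "D S0 \<noteq> 0"
      and quotient: "\<And>T. T \<in> Fam \<Longrightarrow> \<exists>L. ratfun_has_lim (D T / D S0) L"
      using ratfun_ex_dividing_member[of Fam S D] 3(2,3) by blast
    obtain c0 where c0: "ratfun_has_lim (D S0) c0"
      using lim S0(1) by (auto simp: D_def Fam_def)
    have S0_minor: "S0 \<subseteq> {0..<n}" "card S0 = r" "det (submatrix U {0..<r} S0) \<noteq> 0"
      using S0 by (auto simp: Fam_def D_def)
    have "\<And>T. T \<subseteq> {0..<n} \<Longrightarrow> card T = r \<Longrightarrow>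
        \<exists>L. ratfun_has_lim (det (submatrix U {0..<r} T) / det (submatrix U {0..<r} S0)) L"
      using quotient by (auto simp: Fam_def D_def)
    from ex_same_minors_convergent_entries_dividing_minor[OF U 3(1) S0_minor c0[unfolded D_def]
        this]
    show ?thesis
      using that by blast
  qed
qed

lemma ratfun_minor_limits_realizable:
  fixes U :: "'a::real_normed_field poly fract mat"
  assumes U: "U \<in> carrier_mat r n"
    and lim: "\<And>S. S \<subseteq> {0..<n} \<Longrightarrow> card S = r \<Longrightarrow> \<exists>L. ratfun_has_lim (det (submatrix U {0..<r} S)) L"
  obtains Uh :: "'a mat" where "Uh \<in> carrier_mat r n"
    "\<And>S. S \<subseteq> {0..<n} \<Longrightarrow> card S = r \<Longrightarrow>
      ratfun_has_lim (det (submatrix U {0..<r} S)) (det (submatrix Uh {0..<r} S))"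
proof -
  obtain V where V: "V \<in> carrier_mat r n"
      "\<And>i j. i < r \<Longrightarrow> j < n \<Longrightarrow> \<exists>L. ratfun_has_lim (V $$ (i, j)) L"
    and minors_V: "\<And>S. S \<subseteq> {0..<n} \<Longrightarrow> card S = r \<Longrightarrow>
      det (submatrix V {0..<r} S) = det (submatrix U {0..<r} S)"
    using ex_same_minors_convergent_entries[OF U lim] by blast
  obtain Uh where "Uh \<in> carrier_mat r n"
    "\<And>S. S \<subseteq> {0..<n} \<Longrightarrow> card S = r \<Longrightarrow>
      ratfun_has_lim (det (submatrix V {0..<r} S)) (det (submatrix Uh {0..<r} S))"
    using ratfun_has_lim_minors_entrywise[OF V] by blast
  with that show ?thesis
    using minors_V by simp
qed

theorem lemma10:
  shows
   "(\<forall>(r::nat) (n::nat) (U :: real poly fract mat).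
       U \<in> carrier_mat r n \<longrightarrow>
       (\<forall>S. S \<subseteq> {0..<n} \<and> card S = r \<longrightarrow>
            (\<exists>L. ratfun_has_lim (det (submatrix U {0..<r} S)) L)) \<longrightarrow>
       (\<exists>Uh :: real mat. Uh \<in> carrier_mat r n \<and>
          (\<forall>S. S \<subseteq> {0..<n} \<and> card S = r \<longrightarrow>
             ratfun_has_lim (det (submatrix U {0..<r} S)) (det (submatrix Uh {0..<r} S)))))
  \<and>
   (\<forall>(r::nat) (n::nat) (U :: complex poly fract mat).
       U \<in> carrier_mat r n \<longrightarrow>
       (\<forall>S. S \<subseteq> {0..<n} \<and> card S = r \<longrightarrow>
            (\<exists>L. ratfun_has_lim (det (submatrix U {0..<r} S)) L)) \<longrightarrow>
       (\<exists>Uh :: complex mat. Uh \<in> carrier_mat r n \<and>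
          (\<forall>S. S \<subseteq> {0..<n} \<and> card S = r \<longrightarrow>
             ratfun_has_lim (det (submatrix U {0..<r} S)) (det (submatrix Uh {0..<r} S)))))"
  by (intro conjI allI impI; erule ratfun_minor_limits_realizable; blast)

end
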